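(* Let $T = (T_1, \ldots, T_n) \in \mathcal{B}(H)^n$ satisfy $\left\| \sum_{i=1}^n \zeta_i T_i \right\| \leq 1$ for all $\zeta_1,\dots,\zeta_n \in \overline{\mathbb{D}}$, and let $p$ be a polynomial in $n$ variables. Then \[ \|p^{\mathrm{sym}}(T)\| \leq \|\Gamma p\|_{\overline{\mathbb{D}}^n}. \]
   Context: $H$ is a Hilbert space, $\mathbb{D}$ the open unit disk, and $\|f\|_X$ the supremum of $|f|$ on $X$. The operators $T_i$ are not assumed to commute. For a polynomial $p$ in $n$ variables, $p^{\mathrm{sym}}(T)$ denotes the symmetrized evaluation of $p$ at $T$: each monomial $z^\alpha = z_1^{\alpha_1}\cdots z_n^{\alpha_n}$ is sent to the average, over all distinct orderings, of the ordered products of $|\alpha|$ operators containing exactly $\alpha_j$ factors equal to $T_j$ for each $j$ (the empty product being $I$), and this is extended linearly to all polynomials. If $p(z) = \sum_\alpha c_\alpha z^\alpha$, then $\Gamma p(z) = \sum_\alpha c_\alpha \frac{\alpha!}{|\alpha|!} z^\alpha$, where $\alpha! = \alpha_1!\cdots\alpha_n!$ and $|\alpha| = \alpha_1+\cdots+\alpha_n$. *)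

theory Defs
  imports "HOL-Analysis.Analysis"
begin

text \<open>A complex Hilbert space is modelled as a real Hilbert space (real_inner, complete_space)
  together with an orthogonal complex structure J (multiplication by the imaginary unit).
  Complex-linear bounded operators are the real bounded linear operators commuting with J.\<close>

definition complex_structure :: "('a::{real_inner,complete_space} \<Rightarrow>\<^sub>L 'a) \<Rightarrow> bool" where
  "complex_structure J \<longleftrightarrow> J o\<^sub>L J = - id_blinfun \<and> (\<forall>x y. inner (J x) (J y) = inner x y)"

definition complex_linear_op :: "('a::real_normed_vector \<Rightarrow>\<^sub>L 'a) \<Rightarrow> ('a \<Rightarrow>\<^sub>L 'a) \<Rightarrow> bool" where
  "complex_linear_op J A \<longleftrightarrow> A o\<^sub>L J = J o\<^sub>L A"

definition cscale :: "('a::real_normed_vector \<Rightarrow>\<^sub>L 'a) \<Rightarrow> complex \<Rightarrow> ('a \<Rightarrow>\<^sub>L 'a) \<Rightarrow> ('a \<Rightarrow>\<^sub>L 'a)" where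
  "cscale J c A = Re c *\<^sub>R A + Im c *\<^sub>R (J o\<^sub>L A)"

definition word_prod :: "('n \<Rightarrow> ('a::real_normed_vector \<Rightarrow>\<^sub>L 'a)) \<Rightarrow> 'n list \<Rightarrow> ('a \<Rightarrow>\<^sub>L 'a)" where
  "word_prod T w = foldr (\<lambda>i A. T i o\<^sub>L A) w id_blinfun"

definition mi_deg :: "('n::finite \<Rightarrow> nat) \<Rightarrow> nat" where
  "mi_deg \<alpha> = (\<Sum>j\<in>UNIV. \<alpha> j)"

definition orderings :: "('n::finite \<Rightarrow> nat) \<Rightarrow> 'n list set" where
  "orderings \<alpha> = {w. length w = mi_deg \<alpha> \<and> (\<forall>j. count_list w j = \<alpha> j)}"

definition sym_monomial :: "('n::finite \<Rightarrow> ('a::real_normed_vector \<Rightarrow>\<^sub>L 'a)) \<Rightarrow> ('n \<Rightarrow> nat) \<Rightarrow> ('a \<Rightarrow>\<^sub>L 'a)" where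
  "sym_monomial T \<alpha> = (1 / real (card (orderings \<alpha>))) *\<^sub>R (\<Sum>w\<in>orderings \<alpha>. word_prod T w)"

text \<open>A polynomial in the variables indexed by 'n is a finitely supported coefficient function
  on multi-indices.\<close>
definition is_poly :: "(('n \<Rightarrow> nat) \<Rightarrow> complex) \<Rightarrow> bool" where
  "is_poly c \<longleftrightarrow> finite {\<alpha>. c \<alpha> \<noteq> 0}"

definition poly_eval :: "(('n::finite \<Rightarrow> nat) \<Rightarrow> complex) \<Rightarrow> ('n \<Rightarrow> complex) \<Rightarrow> complex" where
  "poly_eval c z = (\<Sum>\<alpha>\<in>{\<alpha>. c \<alpha> \<noteq> 0}. c \<alpha> * (\<Prod>j\<in>UNIV. z j ^ \<alpha> j))"

definition sym_eval :: "('a::real_normed_vector \<Rightarrow>\<^sub>L 'a) \<Rightarrow> (('n::finite \<Rightarrow> nat) \<Rightarrow> complex)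
    \<Rightarrow> ('n \<Rightarrow> ('a \<Rightarrow>\<^sub>L 'a)) \<Rightarrow> ('a \<Rightarrow>\<^sub>L 'a)" where
  "sym_eval J c T = (\<Sum>\<alpha>\<in>{\<alpha>. c \<alpha> \<noteq> 0}. cscale J (c \<alpha>) (sym_monomial T \<alpha>))"

definition Gamma_poly :: "(('n::finite \<Rightarrow> nat) \<Rightarrow> complex) \<Rightarrow> (('n \<Rightarrow> nat) \<Rightarrow> complex)" where
  "Gamma_poly c = (\<lambda>\<alpha>. c \<alpha> * of_real ((\<Prod>j\<in>UNIV. fact (\<alpha> j)) / fact (mi_deg \<alpha>)))"

definition closed_polydisc :: "('n \<Rightarrow> complex) set" where
  "closed_polydisc = {z. \<forall>j. norm (z j) \<le> 1}"

definition sup_norm_polydisc :: "(('n::finite \<Rightarrow> nat) \<Rightarrow> complex) \<Rightarrow> real" where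
  "sup_norm_polydisc c = (SUP z\<in>closed_polydisc. norm (poly_eval c z))"

end

theory Submission
  imports Defs "HOL-Combinatorics.Multiset_Permutations"
begin

text \<open>
  For \<open>\<zeta>\<close> on the torus the operator \<open>A\<^sub>\<zeta> = \<Sum>\<^sub>i \<zeta>\<^sub>i T\<^sub>i\<close> is a contraction, and expanding
  \<open>A\<^sub>\<zeta>\<^sup>k\<close> produces every word of length \<open>k\<close> in the \<open>T\<^sub>i\<close>, weighted by the monomial in \<open>\<zeta>\<close>
  that counts its letters. Averaging \<open>cnj(\<zeta>)\<^sup>\<alpha> A\<^sub>\<zeta>\<^sup>|\<^sup>\<alpha>\<^sup>|\<close> over a fine enough grid of roots of unity
  therefore keeps exactly the orderings of \<open>\<alpha>\<close>. Hence \<open>p\<^sup>s\<^sup>y\<^sup>m(T)\<close> is an average of the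
  operators \<open>q\<^sub>\<zeta>(A\<^sub>\<zeta>)\<close> with \<open>q\<^sub>\<zeta>(w) = \<Gamma>p(w cnj(\<zeta>))\<close>, a polynomial in one variable whose sup norm
  on the circle is at most that of \<open>\<Gamma>p\<close> on the polydisc, and von Neumann's inequality for the
  single contraction \<open>A\<^sub>\<zeta>\<close> bounds each of them.

  Von Neumann's inequality is proved with Fejer means. For a contraction \<open>B\<close> the Fejer form
  \<open>\<Sum>\<^sub>|\<^sub>k\<^sub>|\<^sub><\<^sub>N (1 - |k|/N) \<langle>B\<^sup>(\<^sup>k\<^sup>)u, u\<rangle>\<close> is nonnegative, being a sum of squares of orbit sums.
  Averaging these forms for the rotations \<open>cnj(z) A\<close> over the \<open>2N\<close>-th roots of unity against
  \<open>q(z)\<close> yields the bilinear form of the \<open>N\<close>-th Fejer mean of \<open>q(A)\<close>, which Cauchy-Schwarz for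
  the positive forms bounds by \<open>sup |q| \<parallel>x\<parallel> \<parallel>y\<parallel>\<close>; the Fejer means converge to \<open>q(A)\<close>.
\<close>

section \<open>Complex structure\<close>

definition cmul :: "('a::real_normed_vector \<Rightarrow>\<^sub>L 'a) \<Rightarrow> complex \<Rightarrow> 'a \<Rightarrow> 'a" where
  "cmul J c x = Re c *\<^sub>R x + Im c *\<^sub>R J x"

definition cinner :: "('a::real_inner \<Rightarrow>\<^sub>L 'a) \<Rightarrow> 'a \<Rightarrow> 'a \<Rightarrow> complex" where
  "cinner J x y = Complex (inner x y) (inner x (J y))"

lemma complex_structure_apply_twice:
  assumes "complex_structure J" shows "J (J x) = - x"
proof -
  have "(J o\<^sub>L J) x = (- id_blinfun) x" using assms unfolding complex_structure_def by simp
  thus ?thesis by (simp add: uminus_blinfun.rep_eq)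
qed

lemma complex_structure_inner:
  assumes "complex_structure J" shows "inner (J x) (J y) = inner x y"
  using assms unfolding complex_structure_def by simp

lemma complex_structure_inner_skew:
  assumes "complex_structure J" shows "inner (J x) y = - inner x (J y)"
  using complex_structure_inner[OF assms, of x "J y"] complex_structure_apply_twice[OF assms, of y]
  by simp

lemma complex_linear_op_apply:
  assumes "complex_linear_op J A" shows "A (J x) = J (A x)"
proof -
  have "(A o\<^sub>L J) x = (J o\<^sub>L A) x" using assms unfolding complex_linear_op_def by simp
  thus ?thesis by simp
qed

lemma cscale_apply: "cscale J c A x = cmul J c (A x)"
  by (simp add: cscale_def cmul_def blinfun.bilinear_simps)

lemma cscale_diff_left: "cscale J (a - b) A = cscale J a A - cscale J b A"
  by (simp add: cscale_def scaleR_diff_left algebra_simps)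

lemma cmul_add_left: "cmul J (c + d) x = cmul J c x + cmul J d x"
  by (simp add: cmul_def algebra_simps scaleR_add_left)

lemma cmul_add_right: "cmul J c (x + y) = cmul J c x + cmul J c y"
  by (simp add: cmul_def algebra_simps blinfun.add_right)

lemma cmul_zero_left [simp]: "cmul J 0 x = 0"
  by (simp add: cmul_def)

lemma cmul_zero_right [simp]: "cmul J c 0 = 0"
  by (simp add: cmul_def)

lemma cmul_one [simp]: "cmul J 1 x = x"
  by (simp add: cmul_def)

lemma cmul_of_real: "cmul J (of_real r) x = r *\<^sub>R x"
  by (simp add: cmul_def)

lemma cmul_scaleR_right: "cmul J c (r *\<^sub>R x) = r *\<^sub>R cmul J c x"
  by (simp add: cmul_def blinfun.scaleR_right algebra_simps)

lemma cmul_sum_left: "cmul J (\<Sum>i\<in>I. f i) x = (\<Sum>i\<in>I. cmul J (f i) x)"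
  by (induction I rule: infinite_finite_induct) (auto simp: cmul_add_left)

lemma cmul_sum_right: "cmul J c (\<Sum>i\<in>I. f i) = (\<Sum>i\<in>I. cmul J c (f i))"
  by (induction I rule: infinite_finite_induct) (auto simp: cmul_add_right)

lemma cmul_mult:
  assumes "complex_structure J" shows "cmul J (c * d) x = cmul J c (cmul J d x)"
  using complex_structure_apply_twice[OF assms]
  by (simp add: cmul_def blinfun.bilinear_simps algebra_simps scaleR_add_left)

lemma complex_linear_op_cmul:
  assumes "complex_linear_op J A" shows "A (cmul J c x) = cmul J c (A x)"
  using complex_linear_op_apply[OF assms] by (simp add: cmul_def blinfun.bilinear_simps)

lemma Re_cinner [simp]: "Re (cinner J x y) = inner x y"
  by (simp add: cinner_def)

lemma cinner_sum_left: "cinner J (\<Sum>i\<in>I. f i) z = (\<Sum>i\<in>I. cinner J (f i) z)"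
  by (induction I rule: infinite_finite_induct)
     (auto simp: cinner_def complex_eq_iff inner_add_left)

lemma cinner_cmul_left:
  assumes "complex_structure J" shows "cinner J (cmul J c x) y = c * cinner J x y"
  using complex_structure_inner_skew[OF assms, of x y] complex_structure_inner[OF assms, of x y]
  by (simp add: cinner_def cmul_def complex_eq_iff inner_add_left algebra_simps)

lemma cinner_cmul_right:
  assumes "complex_structure J" shows "cinner J x (cmul J c y) = cnj c * cinner J x y"
  using complex_structure_apply_twice[OF assms, of y]
  by (simp add: cinner_def cmul_def complex_eq_iff inner_add_right blinfun.bilinear_simps algebra_simps)

lemma norm_cmul:
  assumes "complex_structure J" shows "norm (cmul J c x) = norm c * norm x"
proof -
  have "inner x (J x) = 0"
    using complex_structure_inner_skew[OF assms, of x x] by (simp add: inner_commute)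
  hence "inner (cmul J c x) (cmul J c x) = (Re c)\<^sup>2 * inner x x + (Im c)\<^sup>2 * inner x x"
    using complex_structure_inner[OF assms, of x x]
    by (simp add: cmul_def inner_add_left inner_add_right inner_commute algebra_simps power2_eq_square)
  hence "(norm (cmul J c x))\<^sup>2 = (Re c)\<^sup>2 * inner x x + (Im c)\<^sup>2 * inner x x"
    by (simp add: power2_norm_eq_inner)
  also have "\<dots> = (norm c * norm x)\<^sup>2"
    by (simp add: cmod_def power_mult_distrib algebra_simps flip: power2_norm_eq_inner)
  finally show ?thesis by (simp add: power2_eq_iff_nonneg)
qed

lemma norm_cscale_le:
  assumes "complex_structure J" shows "norm (cscale J c A) \<le> norm c * norm A"
  by (rule norm_blinfun_bound)
     (auto simp: cscale_apply norm_cmul[OF assms] mult.assoc intro!: mult_left_mono norm_blinfun)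

lemma complex_linear_op_cscale:
  assumes "complex_structure J" "complex_linear_op J A"
  shows "complex_linear_op J (cscale J c A)"
  unfolding complex_linear_op_def
  by (rule blinfun_eqI)
     (simp add: cscale_apply cmul_def complex_linear_op_apply[OF assms(2)] blinfun.bilinear_simps)

lemma complex_linear_op_sum:
  assumes "\<And>i. i \<in> I \<Longrightarrow> complex_linear_op J (A i)"
  shows "complex_linear_op J (\<Sum>i\<in>I. A i)"
  using assms
proof (induction I rule: infinite_finite_induct)
  case (insert i I)
  hence "complex_linear_op J (A i)" "complex_linear_op J (\<Sum>i\<in>I. A i)" by auto
  thus ?case using insert.hyps unfolding complex_linear_op_def
    by (intro blinfun_eqI) (simp add: blinfun.add_right flip: complex_linear_op_def
        add: complex_linear_op_apply plus_blinfun.rep_eq)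
qed (auto simp: complex_linear_op_def)

section \<open>Fejer forms of a contraction\<close>

primrec blinfun_pow :: "('a::real_normed_vector \<Rightarrow>\<^sub>L 'a) \<Rightarrow> nat \<Rightarrow> ('a \<Rightarrow>\<^sub>L 'a)" where
  "blinfun_pow A 0 = id_blinfun"
| "blinfun_pow A (Suc k) = A o\<^sub>L blinfun_pow A k"

lemma norm_blinfun_pow_apply_le:
  assumes "norm A \<le> 1" shows "norm (blinfun_pow A k x) \<le> norm x"
proof (induction k)
  case (Suc k)
  have "norm (A (blinfun_pow A k x)) \<le> norm A * norm (blinfun_pow A k x)" by (rule norm_blinfun)
  also have "\<dots> \<le> norm (blinfun_pow A k x)" using assms by (simp add: mult_left_le_one_le)
  finally show ?case using Suc by simp
qed simp

lemma norm_blinfun_pow_le: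
  assumes "norm A \<le> 1" shows "norm (blinfun_pow A k) \<le> 1"
  by (rule norm_blinfun_bound) (auto simp: norm_blinfun_pow_apply_le[OF assms])

lemma blinfun_pow_cmul:
  assumes "complex_linear_op J A"
  shows "blinfun_pow A k (cmul J c x) = cmul J c (blinfun_pow A k x)"
  by (induction k) (auto simp: complex_linear_op_cmul[OF assms])

lemma blinfun_pow_cscale:
  assumes "complex_structure J" "complex_linear_op J A"
  shows "blinfun_pow (cscale J c A) k x = cmul J (c ^ k) (blinfun_pow A k x)"
  by (induction k)
     (simp_all add: cscale_apply complex_linear_op_cmul[OF assms(2)] cmul_mult[OF assms(1)])

text \<open>\<open>fejer_form B N u v\<close> is \<open>N\<close> times the real part of \<open>\<langle>\<sigma>\<^sub>N(B) u, v\<rangle>\<close>, where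
  \<open>\<sigma>\<^sub>N(B) = \<Sum>\<^sub>|\<^sub>k\<^sub>|\<^sub><\<^sub>N (1 - |k|/N) B\<^sup>(\<^sup>k\<^sup>)\<close> with \<open>B\<^sup>(\<^sup>-\<^sup>k\<^sup>) = (B\<^sup>*)\<^sup>k\<close>, written without adjoints.\<close>

definition fejer_form :: "('a::real_inner \<Rightarrow>\<^sub>L 'a) \<Rightarrow> nat \<Rightarrow> 'a \<Rightarrow> 'a \<Rightarrow> real" where
  "fejer_form B N u v =
     (\<Sum>k<N. real (N - k) * (inner (blinfun_pow B k u) v + inner u (blinfun_pow B k v)))
     - real N * inner u v"

definition orbit_sum :: "('a::real_normed_vector \<Rightarrow>\<^sub>L 'a) \<Rightarrow> 'a \<Rightarrow> nat \<Rightarrow> 'a" where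
  "orbit_sum B u n = (\<Sum>k<n. blinfun_pow B k u)"

lemma orbit_sum_Suc: "orbit_sum B u (Suc n) = u + B (orbit_sum B u n)"
  unfolding orbit_sum_def
  by (simp add: sum.lessThan_Suc_shift blinfun.sum_right del: sum.lessThan_Suc)

lemma fejer_sum_eq_orbit_sums:
  fixes B :: "'a::real_inner \<Rightarrow>\<^sub>L 'a"
  shows "2 * (\<Sum>k<N. real (N - k) * inner (blinfun_pow B k u) u) - real N * inner u u
     = (norm (orbit_sum B u N))\<^sup>2
       + (\<Sum>i<N. (norm (orbit_sum B u i))\<^sup>2 - (norm (B (orbit_sum B u i)))\<^sup>2)"
proof (induction N)
  case 0
  then show ?case by (simp add: orbit_sum_def)
next
  case (Suc N)
  have "(\<Sum>k<Suc N. real (Suc N - k) * inner (blinfun_pow B k u) u)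
      = (\<Sum>k<Suc N. real (N - k) * inner (blinfun_pow B k u) u + inner (blinfun_pow B k u) u)"
    by (intro sum.cong refl) (auto simp: Suc_diff_le algebra_simps)
  also have "\<dots> = (\<Sum>k<N. real (N - k) * inner (blinfun_pow B k u) u)
                  + inner (orbit_sum B u (Suc N)) u"
    by (simp add: sum.distrib orbit_sum_def inner_sum_left inner_add_left)
  finally show ?case
    using Suc.IH
    by (simp add: orbit_sum_Suc power2_norm_eq_inner inner_add_left inner_add_right
        inner_commute algebra_simps)
qed

lemma fejer_form_nonneg:
  assumes "norm B \<le> 1" shows "0 \<le> fejer_form B N u u"
proof -
  have contract: "(norm (B v))\<^sup>2 \<le> (norm v)\<^sup>2" for v
  proof -
    have "norm (B v) \<le> norm B * norm v" by (rule norm_blinfun)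
    also have "\<dots> \<le> norm v" using assms by (simp add: mult_left_le_one_le)
    finally show ?thesis by (simp add: power_mono)
  qed
  have "fejer_form B N u u = 2 * (\<Sum>k<N. real (N - k) * inner (blinfun_pow B k u) u) - real N * inner u u"
    by (simp add: fejer_form_def inner_commute[of u "blinfun_pow B _ u"] sum_distrib_left algebra_simps)
  also have "\<dots> \<ge> 0"
    unfolding fejer_sum_eq_orbit_sums using contract by (intro add_nonneg_nonneg sum_nonneg) auto
  finally show ?thesis .
qed

lemma fejer_form_eq_inner:
  "fejer_form B N u v = inner (F u) v + inner u (F v) - real N * inner u v"
  if "F = (\<Sum>k<N. real (N - k) *\<^sub>R blinfun_pow B k)"
  by (simp add: that fejer_form_def blinfun.sum_left blinfun.scaleR_left inner_sum_left
      inner_sum_right sum.distrib distrib_left)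

lemma fejer_form_diff_quadratic:
  "fejer_form B N (s *\<^sub>R u - v) (s *\<^sub>R u - v)
     = s\<^sup>2 * fejer_form B N u u - 2 * s * fejer_form B N u v + fejer_form B N v v"
proof -
  define F where "F = (\<Sum>k<N. real (N - k) *\<^sub>R blinfun_pow B k)"
  show ?thesis
    unfolding fejer_form_eq_inner[OF F_def]
    by (simp add: blinfun.diff_right blinfun.scaleR_right inner_diff_left inner_diff_right
        inner_commute[of v u] inner_commute[of "F v" u] inner_commute[of v "F u"]
        algebra_simps power2_eq_square)
qed

lemma fejer_form_cauchy_schwarz:
  assumes "norm B \<le> 1" "t > 0"
  shows "2 * fejer_form B N u v \<le> t * fejer_form B N u u + fejer_form B N v v / t"
proof -
  have "0 \<le> t\<^sup>2 * fejer_form B N u u - 2 * t * fejer_form B N u v + fejer_form B N v v"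
    using fejer_form_nonneg[OF assms(1), of N "t *\<^sub>R u - v"] by (simp add: fejer_form_diff_quadratic)
  hence "t * (2 * fejer_form B N u v) \<le> t * (t * fejer_form B N u u + fejer_form B N v v / t)"
    using assms(2) by (simp add: algebra_simps power2_eq_square)
  thus ?thesis using assms(2) by (simp add: mult_le_cancel_left_pos)
qed

section \<open>Roots of unity and the discrete torus\<close>

definition roots_of_unity :: "nat \<Rightarrow> complex set" where
  "roots_of_unity K = {z. z ^ K = 1}"

lemma finite_roots_of_unity: "K > 0 \<Longrightarrow> finite (roots_of_unity K)"
  unfolding roots_of_unity_def by (rule finite_roots_unity) simp

lemma card_roots_of_unity: "K > 0 \<Longrightarrow> card (roots_of_unity K) = K"
  unfolding roots_of_unity_def by (rule card_roots_unity_eq)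

lemma norm_root_of_unity:
  assumes "K > 0" "z \<in> roots_of_unity K" shows "norm z = 1"
proof -
  have "norm z ^ K = 1 ^ K" using assms by (simp add: roots_of_unity_def flip: norm_power)
  thus ?thesis using assms(1) by (subst (asm) power_eq_iff_eq_base) auto
qed

lemma root_of_unity_mult_cnj:
  assumes "K > 0" "z \<in> roots_of_unity K" shows "z * cnj z = 1"
  using complex_norm_square[of z] norm_root_of_unity[OF assms] by simp

lemma sum_roots_of_unity_power:
  assumes "0 < d" "d < K" shows "(\<Sum>z\<in>roots_of_unity K. z ^ d) = 0"
proof -
  define \<omega> where "\<omega> = cis (2 * pi * real d / real K)"
  have bij: "bij_betw (\<lambda>k. cis (2 * pi * real k / real K)) {..<K} (roots_of_unity K)"
    unfolding roots_of_unity_def by (rule Complex.bij_betw_roots_unity) (use assms in linarith)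
  have "\<omega> \<noteq> cis (2 * pi * real 0 / real K)"
    using inj_on_contraD[OF bij_betw_imp_inj_on[OF bij], of d 0] assms by (simp add: \<omega>_def)
  hence "\<omega> \<noteq> 1" by simp
  have "\<omega> ^ K = 1"
    using assms by (simp add: \<omega>_def Complex.DeMoivre cis_multiple_2pi)
  have "(\<Sum>z\<in>roots_of_unity K. z ^ d) = (\<Sum>k<K. cis (2 * pi * real k / real K) ^ d)"
    by (rule sum.reindex_bij_betw[OF bij, symmetric])
  also have "\<dots> = (\<Sum>k<K. \<omega> ^ k)"
    by (intro sum.cong refl) (simp add: \<omega>_def Complex.DeMoivre flip: power_mult; simp add: mult_ac)
  also have "\<dots> = 0"
    using \<open>\<omega> \<noteq> 1\<close> \<open>\<omega> ^ K = 1\<close> by (simp add: geometric_sum)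
  finally show ?thesis .
qed

lemma sum_roots_of_unity_orthogonal:
  assumes "p < K" "q < K"
  shows "(\<Sum>z\<in>roots_of_unity K. z ^ p * cnj z ^ q) = (if p = q then of_nat K else 0)"
proof -
  have K: "K > 0" using assms by simp
  show ?thesis
  proof (cases "q \<le> p")
    case True
    have "z ^ p * cnj z ^ q = z ^ (p - q)" if "z \<in> roots_of_unity K" for z
    proof -
      have "z ^ p * cnj z ^ q = z ^ (p - q) * (z * cnj z) ^ q"
        using True by (simp add: power_mult_distrib flip: power_add)
      thus ?thesis using root_of_unity_mult_cnj[OF K that] by simp
    qed
    hence "(\<Sum>z\<in>roots_of_unity K. z ^ p * cnj z ^ q) = (\<Sum>z\<in>roots_of_unity K. z ^ (p - q))"
      by (rule sum.cong[OF refl])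
    thus ?thesis
      using True assms card_roots_of_unity[OF K] sum_roots_of_unity_power[of "p - q" K]
      by (cases "p = q") auto
  next
    case False
    have "z ^ p * cnj z ^ q = cnj (z ^ (q - p))" if "z \<in> roots_of_unity K" for z
    proof -
      have "z ^ p * cnj z ^ q = cnj z ^ (q - p) * (z * cnj z) ^ p"
        using False by (simp add: power_mult_distrib mult_ac flip: power_add)
      thus ?thesis using root_of_unity_mult_cnj[OF K that] by simp
    qed
    hence "(\<Sum>z\<in>roots_of_unity K. z ^ p * cnj z ^ q) = cnj (\<Sum>z\<in>roots_of_unity K. z ^ (q - p))"
      by (simp add: cnj_sum)
    thus ?thesis using False assms sum_roots_of_unity_power[of "q - p" K] by simp
  qed
qed

definition torus :: "nat \<Rightarrow> ('n \<Rightarrow> complex) set" where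
  "torus K = PiE UNIV (\<lambda>_. roots_of_unity K)"

lemma card_torus: "K > 0 \<Longrightarrow> card (torus K :: ('n::finite \<Rightarrow> complex) set) = K ^ CARD('n)"
  unfolding torus_def by (simp add: card_PiE card_roots_of_unity)

lemma norm_torus: "K > 0 \<Longrightarrow> \<zeta> \<in> torus K \<Longrightarrow> norm (\<zeta> j) = 1"
  using norm_root_of_unity by (auto simp: torus_def PiE_def Pi_def)

lemma sum_torus_orthogonal:
  fixes p q :: "'n::finite \<Rightarrow> nat"
  assumes "\<And>j. p j < K" "\<And>j. q j < K"
  shows "(\<Sum>\<zeta>\<in>torus K. \<Prod>j\<in>UNIV. \<zeta> j ^ p j * cnj (\<zeta> j) ^ q j)
     = (if p = q then of_nat K ^ CARD('n) else 0)"
proof -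
  have K: "K > 0" using assms(1) by (metis gr_zeroI not_less_zero)
  have "(\<Sum>\<zeta>\<in>torus K. \<Prod>j\<in>UNIV. \<zeta> j ^ p j * cnj (\<zeta> j) ^ q j)
      = (\<Prod>j\<in>UNIV. \<Sum>z\<in>roots_of_unity K. z ^ p j * cnj z ^ q j)"
    unfolding torus_def by (rule prod_sum_PiE[symmetric]) (auto simp: finite_roots_of_unity[OF K])
  also have "\<dots> = (\<Prod>j\<in>UNIV. if p j = q j then of_nat K else 0)"
    using sum_roots_of_unity_orthogonal[OF assms(1) assms(2)] by simp
  also have "\<dots> = (if p = q then of_nat K ^ CARD('n) else 0)"
  proof (cases "p = q")
    case False
    then obtain j where "p j \<noteq> q j" by auto
    thus ?thesis using False by (intro trans[OF prod_zero]) auto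
  qed simp
  finally show ?thesis .
qed

section \<open>Von Neumann's inequality\<close>

definition fejer_cform ::
    "('a::real_inner \<Rightarrow>\<^sub>L 'a) \<Rightarrow> ('a \<Rightarrow>\<^sub>L 'a) \<Rightarrow> nat \<Rightarrow> 'a \<Rightarrow> 'a \<Rightarrow> complex" where
  "fejer_cform J B N u v =
     (\<Sum>k<N. of_nat (N - k) * (cinner J (blinfun_pow B k u) v + cinner J u (blinfun_pow B k v)))
     - of_nat N * cinner J u v"

lemma Re_fejer_cform [simp]: "Re (fejer_cform J B N u v) = fejer_form B N u v"
  unfolding fejer_form_def fejer_cform_def by (simp add: Re_sum)

lemma fejer_cform_cmul_left:
  assumes "complex_structure J" "complex_linear_op J B"
  shows "fejer_cform J B N (cmul J c u) v = c * fejer_cform J B N u v"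
  unfolding fejer_cform_def
  by (simp add: blinfun_pow_cmul[OF assms(2)] cinner_cmul_left[OF assms(1)]
      sum_distrib_left algebra_simps)

lemma fejer_cform_cmul_right:
  assumes "complex_structure J" "complex_linear_op J B"
  shows "fejer_cform J B N u (cmul J c v) = cnj c * fejer_cform J B N u v"
  unfolding fejer_cform_def
  by (simp add: blinfun_pow_cmul[OF assms(2)] cinner_cmul_right[OF assms(1)]
      sum_distrib_left algebra_simps)

text \<open>Averaging the Fejer forms of the rotated contractions against \<open>z ^ d\<close> isolates the
  \<open>d\<close>-th Fourier coefficient: here \<open>2 * N\<close> roots suffice to separate all frequencies
  \<open>-N < k < N\<close>.\<close>

lemma sum_roots_of_unity_fejer_cform:
  assumes J: "complex_structure J" "complex_linear_op J A" and "d < N"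
  shows "(\<Sum>z\<in>roots_of_unity (2 * N). z ^ d * fejer_cform J (cscale J (cnj z) A) N x y)
      = of_nat (2 * N) * of_nat (N - d) * cinner J (blinfun_pow A d x) y"
proof -
  define R where "R = roots_of_unity (2 * N)"
  define K :: complex where "K = of_nat (2 * N)"
  define a where "a k = cinner J (blinfun_pow A k x) y" for k
  define c where "c k = cinner J x (blinfun_pow A k y)" for k
  have orth: "(\<Sum>z\<in>R. z ^ p * cnj z ^ q) = (if p = q then K else 0)" if "p < 2 * N" "q < 2 * N" for p q
    unfolding R_def K_def by (rule sum_roots_of_unity_orthogonal[OF that])
  have "(\<Sum>z\<in>R. z ^ d * fejer_cform J (cscale J (cnj z) A) N x y)
     = (\<Sum>z\<in>R. (\<Sum>k<N. of_nat (N - k) * ((z ^ d * cnj z ^ k) * a k + (z ^ (d + k) * cnj z ^ 0) * c k))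
          - of_nat N * ((z ^ d * cnj z ^ 0) * c 0))"
    unfolding fejer_cform_def a_def c_def
    by (intro sum.cong refl)
       (simp add: blinfun_pow_cscale[OF J] cinner_cmul_left[OF J(1)] cinner_cmul_right[OF J(1)]
        sum_distrib_left right_diff_distrib algebra_simps power_add)
  also have "\<dots> = (\<Sum>k<N. of_nat (N - k) * ((\<Sum>z\<in>R. z ^ d * cnj z ^ k) * a k
                                      + (\<Sum>z\<in>R. z ^ (d + k) * cnj z ^ 0) * c k))
                  - of_nat N * ((\<Sum>z\<in>R. z ^ d * cnj z ^ 0) * c 0)"
    by (simp add: sum_subtractf sum.swap[of _ R "{..<N}"] sum_distrib_left sum_distrib_right
        sum.distrib algebra_simps)
  also have "\<dots> = (\<Sum>k<N. of_nat (N - k) * ((if d = k then K else 0) * a k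
                                             + (if d + k = 0 then K else 0) * c k))
                  - of_nat N * ((if d = 0 then K else 0) * c 0)"
  proof -
    have "(\<Sum>z\<in>R. z ^ d * cnj z ^ k) = (if d = k then K else 0)" if "k \<in> {..<N}" for k
      by (rule orth) (use that \<open>d < N\<close> in auto)
    moreover have "(\<Sum>z\<in>R. z ^ (d + k) * cnj z ^ 0) = (if d + k = 0 then K else 0)"
      if "k \<in> {..<N}" for k
      by (rule orth) (use that \<open>d < N\<close> in auto)
    moreover have "(\<Sum>z\<in>R. z ^ d * cnj z ^ 0) = (if d = 0 then K else 0)"
      by (rule orth) (use \<open>d < N\<close> in auto)
    ultimately show ?thesis by (simp only: cong: sum.cong)
  qed
  also have "\<dots> = K * of_nat (N - d) * a d"
  proof -
    have "(\<Sum>k<N. of_nat (N - k) * ((if d = k then K else 0) * a k + (if d + k = 0 then K else 0) * c k))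
        = (\<Sum>k<N. (if k = d then K * of_nat (N - d) * a d else 0)
                   + (if k = 0 then if d = 0 then K * of_nat N * c 0 else 0 else 0))"
      by (intro sum.cong refl) (auto simp: algebra_simps)
    thus ?thesis using \<open>d < N\<close> by (simp add: sum.distrib)
  qed
  finally show ?thesis by (simp add: R_def K_def a_def)
qed

lemma fejer_form_cmul_cmul:
  assumes "complex_structure J" "complex_linear_op J B"
  shows "fejer_form B N (cmul J c y) (cmul J c y) = (norm c)\<^sup>2 * fejer_form B N y y"
proof -
  have "fejer_form B N (cmul J c y) (cmul J c y) = Re (fejer_cform J B N (cmul J c y) (cmul J c y))"
    by simp
  also have "\<dots> = Re (c * cnj c * fejer_cform J B N y y)"
    unfolding fejer_cform_cmul_left[OF assms] fejer_cform_cmul_right[OF assms] by (simp only: mult_ac)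
  also have "c * cnj c = of_real ((norm c)\<^sup>2)"
    by (rule complex_norm_square[symmetric])
  finally show ?thesis by simp
qed

lemma sum_roots_of_unity_fejer_form:
  assumes J: "complex_structure J" "complex_linear_op J A" and d: "\<And>s. s \<in> S \<Longrightarrow> d s < N"
  shows "(\<Sum>z\<in>roots_of_unity (2 * N).
           fejer_form (cscale J (cnj z) A) N x (cmul J (cnj (\<Sum>s\<in>S. b s * z ^ d s)) y))
       = real (2 * N) * Re (\<Sum>s\<in>S. b s * of_nat (N - d s) * cinner J (blinfun_pow A (d s) x) y)"
proof -
  have cl: "complex_linear_op J (cscale J (cnj z) A)" for z
    by (rule complex_linear_op_cscale[OF J])
  have "(\<Sum>z\<in>roots_of_unity (2 * N).
           fejer_form (cscale J (cnj z) A) N x (cmul J (cnj (\<Sum>s\<in>S. b s * z ^ d s)) y))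
      = Re (\<Sum>z\<in>roots_of_unity (2 * N). (\<Sum>s\<in>S. b s * z ^ d s) * fejer_cform J (cscale J (cnj z) A) N x y)"
    unfolding Re_sum Re_fejer_cform[where J=J, symmetric] fejer_cform_cmul_right[OF J(1) cl] complex_cnj_cnj ..
  also have "\<dots> = Re (\<Sum>s\<in>S. b s * (\<Sum>z\<in>roots_of_unity (2 * N). z ^ d s * fejer_cform J (cscale J (cnj z) A) N x y))"
    by (simp add: sum_distrib_left sum_distrib_right sum.swap[of _ "roots_of_unity (2 * N)" S] mult.assoc)
  also have "\<dots> = Re (\<Sum>s\<in>S. b s * (of_nat (2 * N) * of_nat (N - d s) * cinner J (blinfun_pow A (d s) x) y))"
    by (simp add: sum_roots_of_unity_fejer_cform[OF J d])
  also have "\<dots> = real (2 * N) * Re (\<Sum>s\<in>S. b s * of_nat (N - d s) * cinner J (blinfun_pow A (d s) x) y)"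
    by (simp add: sum_distrib_left mult_ac Re_sum)
  finally show ?thesis .
qed

lemma sum_roots_of_unity_fejer_form_diagonal:
  assumes J: "complex_structure J" "complex_linear_op J A" and "N > 0"
  shows "(\<Sum>z\<in>roots_of_unity (2 * N). fejer_form (cscale J (cnj z) A) N u u)
       = real (2 * N) * real N * (norm u)\<^sup>2"
  using sum_roots_of_unity_fejer_form[OF J, of "{0::nat}" "\<lambda>_. 0" N u "\<lambda>_. 1" u] \<open>N > 0\<close>
  by (simp add: power2_norm_eq_inner)

lemma le_mult_of_am_gm_bound:
  fixes s a b M :: real
  assumes H: "\<And>t. t > 0 \<Longrightarrow> 2 * s \<le> t * a\<^sup>2 + M\<^sup>2 * b\<^sup>2 / t"
    and "a \<ge> 0" "b \<ge> 0" "M \<ge> 0"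
  shows "s \<le> M * a * b"
proof (cases "a > 0 \<and> M * b > 0")
  case True
  have "2 * s \<le> (M * b / a) * a\<^sup>2 + M\<^sup>2 * b\<^sup>2 / (M * b / a)"
    using H[of "M * b / a"] True by simp
  also have "\<dots> = 2 * (M * a * b)"
    using True by (simp add: field_simps power2_eq_square)
  finally show ?thesis by simp
next
  case False
  hence "M * a * b = 0" using assms(2-4) mult_nonneg_nonneg[of M b] by fastforce
  moreover have "s \<le> 0"
  proof (rule ccontr)
    assume "\<not> s \<le> 0"
    hence s: "s > 0" by simp
    consider "a = 0" | "M * b = 0"
      using False assms(2-4) mult_nonneg_nonneg[of M b] by fastforce
    thus False
    proof cases
      case 1
      define t where "t = (M\<^sup>2 * b\<^sup>2 + 1) / s"
      have "2 * s \<le> M\<^sup>2 * b\<^sup>2 / t" using H[of t] 1 s by (simp add: t_def add_nonneg_pos)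
      also have "\<dots> < s"
        using s add_pos_nonneg[of 1 "M\<^sup>2 * b\<^sup>2"] by (simp add: t_def field_simps)
      finally show False using s by simp
    next
      case 2
      define t where "t = s / (a\<^sup>2 + 1)"
      have "2 * s \<le> t * a\<^sup>2" using H[of t] 2 s by (simp add: t_def add_nonneg_pos power_mult_distrib[symmetric])
      also have "\<dots> < s"
        using s add_pos_nonneg[of 1 "a\<^sup>2"] by (simp add: t_def field_simps)
      finally show False using s by simp
    qed
  qed
  ultimately show ?thesis by linarith
qed

lemma norm_blinfun_le_of_inner_le:
  fixes G :: "'a::real_inner \<Rightarrow>\<^sub>L 'a"
  assumes "0 \<le> M" and G: "\<And>x y. inner (G x) y \<le> M * norm x * norm y"
  shows "norm G \<le> M"
proof (rule norm_blinfun_bound[OF \<open>0 \<le> M\<close>])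
  fix x
  have "norm (G x) * norm (G x) \<le> (M * norm x) * norm (G x)"
    using G[of x "G x"] by (simp add: power2_norm_eq_inner[symmetric] power2_eq_square)
  thus "norm (G x) \<le> M * norm x"
    using \<open>0 \<le> M\<close> by (cases "norm (G x) = 0") (auto simp: mult_le_cancel_right)
qed

lemma von_neumann_fejer_mean:
  assumes J: "complex_structure J" "complex_linear_op J A" and "norm A \<le> 1"
    and d: "\<And>s. s \<in> S \<Longrightarrow> d s < N" and "N > 0"
    and bound: "\<And>w. norm w = 1 \<Longrightarrow> norm (\<Sum>s\<in>S. b s * w ^ d s) \<le> M"
  shows "norm (\<Sum>s\<in>S. cscale J (b s * of_real (real (N - d s) / real N)) (blinfun_pow A (d s))) \<le> M"
    (is "norm ?G \<le> M")
proof -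
  define R where "R = roots_of_unity (2 * N)"
  define B where "B z = cscale J (cnj z) A" for z
  define g where "g z = (\<Sum>s\<in>S. b s * z ^ d s)" for z
  define KN where "KN = real (2 * N) * real N"
  have "KN > 0" using \<open>N > 0\<close> by (simp add: KN_def)
  have "0 \<le> M" using bound[of 1] by (meson norm_ge_zero norm_one order_trans)
  have clB: "complex_linear_op J (B z)" for z
    unfolding B_def by (rule complex_linear_op_cscale[OF J])
  have norm_B: "norm (B z) \<le> 1" if "z \<in> R" for z
    using norm_cscale_le[OF J(1), of "cnj z" A] \<open>norm A \<le> 1\<close>
      norm_root_of_unity[of "2 * N" z] that \<open>N > 0\<close> by (simp add: B_def R_def)
  have norm_g: "norm (g z) \<le> M" if "z \<in> R" for z
    unfolding g_def using that \<open>N > 0\<close> by (intro bound norm_root_of_unity) (auto simp: R_def)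
  have scaled: "KN * inner (?G x) y = (\<Sum>z\<in>R. fejer_form (B z) N x (cmul J (cnj (g z)) y))" for x y
  proof -
    have "KN * inner (?G x) y = KN * Re (cinner J (?G x) y)"
      by simp
    also have "cinner J (?G x) y
        = (\<Sum>s\<in>S. b s * of_real (real (N - d s) / real N) * cinner J (blinfun_pow A (d s) x) y)"
      by (simp add: blinfun.sum_left cscale_apply cinner_sum_left cinner_cmul_left[OF J(1)])
    also have "KN * Re \<dots>
        = real (2 * N) * Re (\<Sum>s\<in>S. b s * of_nat (N - d s) * cinner J (blinfun_pow A (d s) x) y)"
      using \<open>N > 0\<close> by (simp add: KN_def Re_sum sum_distrib_left mult_ac)
    also have "\<dots> = (\<Sum>z\<in>R. fejer_form (B z) N x (cmul J (cnj (g z)) y))"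
      unfolding R_def B_def g_def by (rule sum_roots_of_unity_fejer_form[OF J d, symmetric])
    finally show ?thesis .
  qed
  have "2 * inner (?G x) y \<le> t * (norm x)\<^sup>2 + M\<^sup>2 * (norm y)\<^sup>2 / t" if "t > 0" for x y t
  proof -
    have "KN * (2 * inner (?G x) y) = (\<Sum>z\<in>R. 2 * fejer_form (B z) N x (cmul J (cnj (g z)) y))"
      unfolding mult.left_commute[of KN] scaled sum_distrib_left ..
    also have "\<dots> \<le> (\<Sum>z\<in>R. t * fejer_form (B z) N x x + M\<^sup>2 * fejer_form (B z) N y y / t)"
    proof (intro sum_mono)
      fix z assume "z \<in> R"
      have "2 * fejer_form (B z) N x (cmul J (cnj (g z)) y)
          \<le> t * fejer_form (B z) N x x + (norm (g z))\<^sup>2 * fejer_form (B z) N y y / t"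
        using fejer_form_cauchy_schwarz[OF norm_B[OF \<open>z \<in> R\<close>] \<open>t > 0\<close>, of N x "cmul J (cnj (g z)) y"]
        by (simp add: fejer_form_cmul_cmul[OF J(1) clB])
      also have "(norm (g z))\<^sup>2 * fejer_form (B z) N y y \<le> M\<^sup>2 * fejer_form (B z) N y y"
        using norm_g[OF \<open>z \<in> R\<close>] fejer_form_nonneg[OF norm_B[OF \<open>z \<in> R\<close>]]
        by (intro mult_right_mono power_mono) auto
      finally show "2 * fejer_form (B z) N x (cmul J (cnj (g z)) y)
          \<le> t * fejer_form (B z) N x x + M\<^sup>2 * fejer_form (B z) N y y / t"
        using \<open>t > 0\<close> by (simp add: divide_right_mono)
    qed
    also have "\<dots> = t * (\<Sum>z\<in>R. fejer_form (B z) N x x) + M\<^sup>2 * (\<Sum>z\<in>R. fejer_form (B z) N y y) / t"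
      by (simp add: sum.distrib sum_distrib_left sum_divide_distrib)
    also have "\<dots> = KN * (t * (norm x)\<^sup>2 + M\<^sup>2 * (norm y)\<^sup>2 / t)"
      unfolding R_def B_def sum_roots_of_unity_fejer_form_diagonal[OF J \<open>N > 0\<close>] KN_def
      by (simp add: algebra_simps)
    finally show ?thesis using \<open>KN > 0\<close> by (simp only: mult_le_cancel_left_pos)
  qed
  hence "inner (?G x) y \<le> M * norm x * norm y" for x y
    by (intro le_mult_of_am_gm_bound) (auto simp: \<open>0 \<le> M\<close>)
  thus ?thesis by (rule norm_blinfun_le_of_inner_le[OF \<open>0 \<le> M\<close>])
qed

theorem von_neumann_inequality:
  assumes J: "complex_structure J" "complex_linear_op J A" and "norm A \<le> 1" and "finite S"
    and bound: "\<And>w. norm w = 1 \<Longrightarrow> norm (\<Sum>s\<in>S. b s * w ^ d s) \<le> M"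
  shows "norm (\<Sum>s\<in>S. cscale J (b s) (blinfun_pow A (d s))) \<le> M"
proof (rule field_le_epsilon)
  fix e :: real assume "e > 0"
  define C where "C = (\<Sum>s\<in>S. norm (b s) * real (d s))"
  define N where "N = nat \<lceil>C / e\<rceil> + (\<Sum>s\<in>S. d s) + 1"
  have "N > 0" by (simp add: N_def)
  have d: "d s < N" if "s \<in> S" for s
    using member_le_sum[OF that _ \<open>finite S\<close>, of d] by (simp add: N_def)
  have "C / e < real N" unfolding N_def by linarith
  hence "C / real N \<le> e" using \<open>e > 0\<close> \<open>N > 0\<close> by (simp add: field_simps)
  define E where "E = (\<Sum>s\<in>S. cscale J (b s * of_real (real (d s) / real N)) (blinfun_pow A (d s)))"
  have split: "(\<Sum>s\<in>S. cscale J (b s) (blinfun_pow A (d s)))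
      = (\<Sum>s\<in>S. cscale J (b s * of_real (real (N - d s) / real N)) (blinfun_pow A (d s))) + E"
  proof -
    have "b s * of_real (real (N - d s) / real N) = b s - b s * of_real (real (d s) / real N)"
      if "s \<in> S" for s
      using d[OF that] \<open>N > 0\<close> by (simp add: of_nat_diff field_simps)
    thus ?thesis
      by (simp add: E_def cscale_diff_left sum_subtractf cong: sum.cong)
  qed
  have "norm E \<le> (\<Sum>s\<in>S. norm (b s * of_real (real (d s) / real N)) * norm (blinfun_pow A (d s)))"
    unfolding E_def by (intro norm_sum[THEN order_trans] sum_mono norm_cscale_le[OF J(1)])
  also have "\<dots> \<le> (\<Sum>s\<in>S. norm (b s * of_real (real (d s) / real N)))"
    using norm_blinfun_pow_le[OF \<open>norm A \<le> 1\<close>] by (intro sum_mono mult_left_le) auto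
  also have "\<dots> = C / real N"
    by (simp add: C_def sum_divide_distrib norm_mult norm_divide)
  finally have "norm E \<le> e" using \<open>C / real N \<le> e\<close> by linarith
  moreover have "norm (\<Sum>s\<in>S. cscale J (b s * of_real (real (N - d s) / real N)) (blinfun_pow A (d s))) \<le> M"
    by (rule von_neumann_fejer_mean[OF J \<open>norm A \<le> 1\<close> d \<open>N > 0\<close> bound])
  ultimately show "norm (\<Sum>s\<in>S. cscale J (b s) (blinfun_pow A (d s))) \<le> M + e"
    unfolding split by (meson add_mono norm_triangle_le)
qed

section \<open>Symmetrized evaluation as a torus average\<close>

definition linear_pencil ::
    "('a::real_normed_vector \<Rightarrow>\<^sub>L 'a) \<Rightarrow> ('n::finite \<Rightarrow> ('a \<Rightarrow>\<^sub>L 'a)) \<Rightarrow> ('n \<Rightarrow> complex) \<Rightarrow> ('a \<Rightarrow>\<^sub>L 'a)" where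
  "linear_pencil J T \<zeta> = (\<Sum>i\<in>UNIV. cscale J (\<zeta> i) (T i))"

definition word_monomial :: "('n::finite \<Rightarrow> complex) \<Rightarrow> 'n list \<Rightarrow> complex" where
  "word_monomial \<zeta> w = (\<Prod>j\<in>UNIV. \<zeta> j ^ count_list w j)"

lemma word_monomial_Cons: "word_monomial \<zeta> (i # w) = \<zeta> i * word_monomial \<zeta> w"
proof -
  have "word_monomial \<zeta> (i # w) = (\<Prod>j\<in>UNIV. (if j = i then \<zeta> j else 1) * \<zeta> j ^ count_list w j)"
    unfolding word_monomial_def by (intro prod.cong refl) auto
  also have "\<dots> = \<zeta> i * word_monomial \<zeta> w"
    by (simp add: prod.distrib word_monomial_def)
  finally show ?thesis .
qed

lemma word_prod_Cons: "word_prod T (i # w) x = T i (word_prod T w x)"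
  by (simp add: word_prod_def)

lemma sum_lists_length_Suc:
  "(\<Sum>w\<in>{w::'n::finite list. length w = Suc k}. f w) = (\<Sum>i\<in>UNIV. \<Sum>w\<in>{w. length w = k}. f (i # w))"
proof -
  have "{w::'n list. length w = Suc k} = case_prod (#) ` (UNIV \<times> {w. length w = k})"
    by (auto simp: length_Suc_conv)
  moreover have "inj_on (case_prod (#)) (UNIV \<times> {w::'n list. length w = k})"
    by (auto simp: inj_on_def)
  ultimately show ?thesis
    by (simp add: sum.reindex sum.cartesian_product split_def)
qed

lemma blinfun_pow_linear_pencil:
  assumes J: "complex_structure J" and T: "\<And>i. complex_linear_op J (T i)"
  shows "blinfun_pow (linear_pencil J T \<zeta>) k x
       = (\<Sum>w\<in>{w. length w = k}. cmul J (word_monomial \<zeta> w) (word_prod T w x))"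
proof (induction k)
  case 0
  have "{w::'n list. length w = 0} = {[]}" by auto
  thus ?case by (simp add: word_monomial_def word_prod_def)
next
  case (Suc k)
  have "blinfun_pow (linear_pencil J T \<zeta>) (Suc k) x
      = (\<Sum>i\<in>UNIV. \<Sum>w\<in>{w. length w = k}. cmul J (\<zeta> i * word_monomial \<zeta> w) (T i (word_prod T w x)))"
    unfolding blinfun_pow.simps blinfun_apply_blinfun_compose Suc.IH
    by (simp add: linear_pencil_def blinfun.sum_left cscale_apply blinfun.sum_right
        cmul_sum_right complex_linear_op_cmul[OF T] cmul_mult[OF J] sum.swap[of _ UNIV])
  also have "\<dots> = (\<Sum>w\<in>{w. length w = Suc k}. cmul J (word_monomial \<zeta> w) (word_prod T w x))"
    by (simp add: sum_lists_length_Suc word_monomial_Cons word_prod_Cons)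
  finally show ?case .
qed

definition mset_of_multi_index :: "('n::finite \<Rightarrow> nat) \<Rightarrow> 'n multiset" where
  "mset_of_multi_index \<alpha> = (\<Sum>j\<in>UNIV. replicate_mset (\<alpha> j) j)"

lemma count_mset_of_multi_index [simp]: "count (mset_of_multi_index \<alpha>) j = \<alpha> j"
  unfolding mset_of_multi_index_def count_sum by (simp add: count_replicate_mset)

lemma size_mset_of_multi_index: "size (mset_of_multi_index \<alpha>) = mi_deg \<alpha>"
  by (simp add: mset_of_multi_index_def mi_deg_def)

lemma orderings_eq_permutations_of_multiset:
  "orderings \<alpha> = permutations_of_multiset (mset_of_multi_index \<alpha>)"
proof -
  have "w \<in> orderings \<alpha> \<longleftrightarrow> mset w = mset_of_multi_index \<alpha>" for w
  proof
    assume w: "mset w = mset_of_multi_index \<alpha>"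
    hence "count_list w j = \<alpha> j" for j
      by (metis count_mset count_mset_of_multi_index)
    moreover have "length w = mi_deg \<alpha>"
      using arg_cong[OF w, of size] by (simp add: size_mset_of_multi_index)
    ultimately show "w \<in> orderings \<alpha>" by (simp add: orderings_def)
  qed (auto simp: orderings_def multiset_eq_iff count_mset)
  thus ?thesis by (auto simp: permutations_of_multiset_def)
qed

lemma card_orderings:
  "card (orderings \<alpha>) * (\<Prod>j\<in>UNIV. fact (\<alpha> j)) = fact (mi_deg \<alpha>)"
proof -
  have "(\<Prod>j\<in>set_mset (mset_of_multi_index \<alpha>). fact (\<alpha> j)) = (\<Prod>j\<in>UNIV. fact (\<alpha> j) :: nat)"
    by (rule prod.mono_neutral_left) (auto simp: not_in_iff)
  thus ?thesis
    using card_permutations_of_multiset_aux[of "mset_of_multi_index \<alpha>"]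
    by (simp add: orderings_eq_permutations_of_multiset size_mset_of_multi_index)
qed

lemma Gamma_poly_mult_card_orderings: "Gamma_poly c \<alpha> * of_nat (card (orderings \<alpha>)) = c \<alpha>"
proof -
  have "real (card (orderings \<alpha>)) * (\<Prod>j\<in>UNIV. fact (\<alpha> j)) = fact (mi_deg \<alpha>)"
    using arg_cong[OF card_orderings[of \<alpha>], of real] by (simp add: of_nat_prod)
  hence "(\<Prod>j\<in>UNIV. fact (\<alpha> j)) / fact (mi_deg \<alpha>) * real (card (orderings \<alpha>)) = (1::real)"
    by (simp add: field_simps)
  hence "complex_of_real ((\<Prod>j\<in>UNIV. fact (\<alpha> j)) / fact (mi_deg \<alpha>)) * of_nat (card (orderings \<alpha>)) = 1"
    by (metis of_real_1 of_real_mult of_real_of_nat_eq)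
  thus ?thesis by (simp add: Gamma_poly_def mult.assoc)
qed

lemma Gamma_poly_eq_0_iff: "Gamma_poly c \<alpha> = 0 \<longleftrightarrow> c \<alpha> = 0"
  using Gamma_poly_mult_card_orderings[of c \<alpha>] by (auto simp: Gamma_poly_def)

lemma norm_poly_eval_le_sup_norm_polydisc:
  assumes "z \<in> closed_polydisc" shows "norm (poly_eval c z) \<le> sup_norm_polydisc c"
proof -
  have "norm (poly_eval c z') \<le> (\<Sum>\<alpha>\<in>{\<alpha>. c \<alpha> \<noteq> 0}. norm (c \<alpha>))" if "z' \<in> closed_polydisc" for z'
  proof -
    have "norm (\<Prod>j\<in>UNIV. z' j ^ \<alpha> j) \<le> (\<Prod>j\<in>UNIV. norm (z' j ^ \<alpha> j))" for \<alpha>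
      by (rule norm_prod_le)
    also have "\<dots> \<alpha> \<le> 1" for \<alpha>
      using that by (intro prod_le_1) (auto simp: closed_polydisc_def norm_power power_le_one)
    finally have "norm (\<Prod>j\<in>UNIV. z' j ^ \<alpha> j) \<le> 1" for \<alpha> .
    hence "norm (c \<alpha> * (\<Prod>j\<in>UNIV. z' j ^ \<alpha> j)) \<le> norm (c \<alpha>)" for \<alpha>
      by (simp add: norm_mult mult_left_le)
    thus ?thesis unfolding poly_eval_def by (intro norm_sum[THEN order_trans] sum_mono)
  qed
  thus ?thesis unfolding sup_norm_polydisc_def
    by (intro cSUP_upper[OF assms] bdd_aboveI2) blast
qed

lemma torus_average_word_monomial:
  fixes \<alpha> :: "'n::finite \<Rightarrow> nat"
  assumes "length w = mi_deg \<alpha>" "mi_deg \<alpha> < K"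
  shows "(\<Sum>\<zeta>\<in>torus K. (\<Prod>j\<in>UNIV. cnj (\<zeta> j) ^ \<alpha> j) * word_monomial \<zeta> w)
       = (if w \<in> orderings \<alpha> then of_nat K ^ CARD('n) else 0)"
proof -
  have "count_list w j < K" for j
    using count_le_length[of w j] assms by simp
  moreover have "\<alpha> j < K" for j
    using member_le_sum[of j UNIV \<alpha>] assms(2) by (simp add: mi_deg_def)
  ultimately have "(\<Sum>\<zeta>\<in>torus K. \<Prod>j\<in>UNIV. \<zeta> j ^ count_list w j * cnj (\<zeta> j) ^ \<alpha> j)
      = (if (\<lambda>j. count_list w j) = \<alpha> then of_nat K ^ CARD('n) else 0)"
    by (rule sum_torus_orthogonal)
  thus ?thesis
    using assms(1) by (simp add: word_monomial_def orderings_def prod.distrib mult_ac fun_eq_iff)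
qed

lemma torus_average_pencil_power:
  fixes \<alpha> :: "'n::finite \<Rightarrow> nat"
  assumes J: "complex_structure J" and T: "\<And>i. complex_linear_op J (T i)" and "mi_deg \<alpha> < K"
  shows "(\<Sum>\<zeta>\<in>torus K. cmul J (\<Prod>j\<in>UNIV. cnj (\<zeta> j) ^ \<alpha> j)
                          (blinfun_pow (linear_pencil J T \<zeta>) (mi_deg \<alpha>) x))
       = (real K ^ CARD('n)) *\<^sub>R (\<Sum>w\<in>orderings \<alpha>. word_prod T w x)"
proof -
  define W where "W = {w::'n list. length w = mi_deg \<alpha>}"
  have "finite W"
    using finite_lists_length_eq[of "UNIV::'n set" "mi_deg \<alpha>"] by (simp add: W_def)
  have "orderings \<alpha> \<subseteq> W" by (auto simp: orderings_def W_def)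
  have "(\<Sum>\<zeta>\<in>torus K. cmul J (\<Prod>j\<in>UNIV. cnj (\<zeta> j) ^ \<alpha> j)
                          (blinfun_pow (linear_pencil J T \<zeta>) (mi_deg \<alpha>) x))
      = (\<Sum>w\<in>W. cmul J (\<Sum>\<zeta>\<in>torus K. (\<Prod>j\<in>UNIV. cnj (\<zeta> j) ^ \<alpha> j) * word_monomial \<zeta> w)
                      (word_prod T w x))"
    by (simp add: blinfun_pow_linear_pencil[OF J T] W_def cmul_sum_right cmul_sum_left
        cmul_mult[OF J] sum.swap[of _ "torus K"])
  also have "\<dots> = (\<Sum>w\<in>W. if w \<in> orderings \<alpha> then (real K ^ CARD('n)) *\<^sub>R word_prod T w x else 0)"
    using \<open>mi_deg \<alpha> < K\<close> cmul_of_real[of J "real K ^ CARD('n)", simplified]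
    by (intro sum.cong refl) (simp add: W_def torus_average_word_monomial)
  also have "\<dots> = (real K ^ CARD('n)) *\<^sub>R (\<Sum>w\<in>orderings \<alpha>. word_prod T w x)"
    using \<open>finite W\<close> \<open>orderings \<alpha> \<subseteq> W\<close>
    by (simp add: sum.If_cases Int_absorb1 scaleR_sum_right)
  finally show ?thesis .
qed

text \<open>The operator \<open>q\<^sub>\<zeta>(A\<^sub>\<zeta>)\<close> with \<open>q\<^sub>\<zeta>(w) = \<Gamma>p(w cnj(\<zeta>))\<close> and \<open>A\<^sub>\<zeta> = linear_pencil J T \<zeta>\<close>.\<close>

definition rotated_Gamma_eval ::
    "('a::real_normed_vector \<Rightarrow>\<^sub>L 'a) \<Rightarrow> (('n::finite \<Rightarrow> nat) \<Rightarrow> complex) \<Rightarrow> ('n \<Rightarrow> ('a \<Rightarrow>\<^sub>L 'a))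
      \<Rightarrow> ('n \<Rightarrow> complex) \<Rightarrow> ('a \<Rightarrow>\<^sub>L 'a)" where
  "rotated_Gamma_eval J c T \<zeta> = (\<Sum>\<alpha>\<in>{\<alpha>. c \<alpha> \<noteq> 0}.
     cscale J (Gamma_poly c \<alpha> * (\<Prod>j\<in>UNIV. cnj (\<zeta> j) ^ \<alpha> j)) (blinfun_pow (linear_pencil J T \<zeta>) (mi_deg \<alpha>)))"

lemma sym_eval_eq_torus_average:
  fixes T :: "'n::finite \<Rightarrow> ('a::{real_inner,complete_space} \<Rightarrow>\<^sub>L 'a)"
  assumes J: "complex_structure J" and T: "\<And>i. complex_linear_op J (T i)"
    and K: "\<And>\<alpha>. c \<alpha> \<noteq> 0 \<Longrightarrow> mi_deg \<alpha> < K"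
  shows "sym_eval J c T = (1 / real K ^ CARD('n)) *\<^sub>R (\<Sum>\<zeta>\<in>torus K. rotated_Gamma_eval J c T \<zeta>)"
proof (rule blinfun_eqI)
  fix x
  have monomial: "cmul J (c \<alpha>) (sym_monomial T \<alpha> x)
      = (1 / real K ^ CARD('n)) *\<^sub>R (\<Sum>\<zeta>\<in>torus K. cmul J (Gamma_poly c \<alpha> * (\<Prod>j\<in>UNIV. cnj (\<zeta> j) ^ \<alpha> j))
                                      (blinfun_pow (linear_pencil J T \<zeta>) (mi_deg \<alpha>) x))"
    if "c \<alpha> \<noteq> 0" for \<alpha>
  proof -
    have "card (orderings \<alpha>) \<noteq> 0"
      using card_orderings[of \<alpha>] by (metis fact_nonzero mult_eq_0_iff)
    hence "cmul J (c \<alpha>) (sym_monomial T \<alpha> x) = cmul J (Gamma_poly c \<alpha>) (\<Sum>w\<in>orderings \<alpha>. word_prod T w x)"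
      unfolding Gamma_poly_mult_card_orderings[of c \<alpha>, symmetric] cmul_mult[OF J]
      by (simp add: sym_monomial_def blinfun.scaleR_left blinfun.sum_left
          cmul_of_real[of J "real (card (orderings \<alpha>))", simplified])
    also have "\<dots> = (1 / real K ^ CARD('n)) *\<^sub>R cmul J (Gamma_poly c \<alpha>) (\<Sum>\<zeta>\<in>torus K.
                        cmul J (\<Prod>j\<in>UNIV. cnj (\<zeta> j) ^ \<alpha> j) (blinfun_pow (linear_pencil J T \<zeta>) (mi_deg \<alpha>) x))"
      using K[OF that]
      by (simp add: torus_average_pencil_power[OF J T K[OF that]] cmul_scaleR_right)
    finally show ?thesis
      by (simp add: cmul_sum_right cmul_mult[OF J])
  qed
  have "sym_eval J c T x = (\<Sum>\<alpha>\<in>{\<alpha>. c \<alpha> \<noteq> 0}. cmul J (c \<alpha>) (sym_monomial T \<alpha> x))"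
    by (simp add: sym_eval_def blinfun.sum_left cscale_apply)
  also have "\<dots> = ((1 / real K ^ CARD('n)) *\<^sub>R (\<Sum>\<zeta>\<in>torus K. rotated_Gamma_eval J c T \<zeta>)) x"
    by (simp add: monomial rotated_Gamma_eval_def blinfun.scaleR_left blinfun.sum_left cscale_apply
        scaleR_sum_right sum.swap[of _ "torus K"])
  finally show "sym_eval J c T x = ((1 / real K ^ CARD('n)) *\<^sub>R (\<Sum>\<zeta>\<in>torus K. rotated_Gamma_eval J c T \<zeta>)) x" .
qed

lemma norm_rotated_Gamma_eval_le:
  assumes J: "complex_structure J" and T: "\<And>i. complex_linear_op J (T i)" and "is_poly c"
    and \<zeta>: "\<And>j. norm (\<zeta> j) = 1" and contraction: "norm (linear_pencil J T \<zeta>) \<le> 1"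
  shows "norm (rotated_Gamma_eval J c T \<zeta>) \<le> sup_norm_polydisc (Gamma_poly c)"
  unfolding rotated_Gamma_eval_def
proof (rule von_neumann_inequality[OF J(1) _ contraction])
  show "complex_linear_op J (linear_pencil J T \<zeta>)"
    unfolding linear_pencil_def by (intro complex_linear_op_sum complex_linear_op_cscale J T)
  show "finite {\<alpha>. c \<alpha> \<noteq> 0}" using \<open>is_poly c\<close> by (simp add: is_poly_def)
  fix w :: complex assume "norm w = 1"
  define z where "z j = w * cnj (\<zeta> j)" for j
  have "z \<in> closed_polydisc"
    using \<zeta> \<open>norm w = 1\<close> by (simp add: closed_polydisc_def z_def norm_mult)
  moreover have "poly_eval (Gamma_poly c) z
      = (\<Sum>\<alpha>\<in>{\<alpha>. c \<alpha> \<noteq> 0}. Gamma_poly c \<alpha> * (\<Prod>j\<in>UNIV. cnj (\<zeta> j) ^ \<alpha> j) * w ^ mi_deg \<alpha>)"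
    by (simp add: poly_eval_def Gamma_poly_eq_0_iff z_def power_mult_distrib prod.distrib
        mi_deg_def power_sum mult_ac)
  ultimately show "norm (\<Sum>\<alpha>\<in>{\<alpha>. c \<alpha> \<noteq> 0}. Gamma_poly c \<alpha> * (\<Prod>j\<in>UNIV. cnj (\<zeta> j) ^ \<alpha> j) * w ^ mi_deg \<alpha>)
      \<le> sup_norm_polydisc (Gamma_poly c)"
    by (metis norm_poly_eval_le_sup_norm_polydisc)
qed

theorem proposition4p2:
  fixes J :: "'a::{real_inner,complete_space} \<Rightarrow>\<^sub>L 'a"
    and T :: "'n::finite \<Rightarrow> ('a \<Rightarrow>\<^sub>L 'a)"
    and c :: "('n \<Rightarrow> nat) \<Rightarrow> complex"
  assumes "complex_structure J"
    and "\<forall>i. complex_linear_op J (T i)"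
    and "\<forall>\<zeta>::'n \<Rightarrow> complex. (\<forall>i. norm (\<zeta> i) \<le> 1) \<longrightarrow>
           norm (\<Sum>i\<in>UNIV. cscale J (\<zeta> i) (T i)) \<le> 1"
    and "is_poly c"
  shows "norm (sym_eval J c T) \<le> sup_norm_polydisc (Gamma_poly c)"
proof -
  note J = assms(1) and T = assms(2)[rule_format]
  define K where "K = Suc (\<Sum>\<alpha>\<in>{\<alpha>. c \<alpha> \<noteq> 0}. mi_deg \<alpha>)"
  have "K > 0" by (simp add: K_def)
  have deg: "mi_deg \<alpha> < K" if "c \<alpha> \<noteq> 0" for \<alpha>
    using member_le_sum[of \<alpha> "{\<alpha>. c \<alpha> \<noteq> 0}" mi_deg] that \<open>is_poly c\<close>
    by (simp add: K_def is_poly_def)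
  have term_bound: "norm (rotated_Gamma_eval J c T \<zeta>) \<le> sup_norm_polydisc (Gamma_poly c)"
    if "\<zeta> \<in> torus K" for \<zeta>
    using norm_torus[OF \<open>K > 0\<close> that] assms(3)
    by (intro norm_rotated_Gamma_eval_le[OF J T \<open>is_poly c\<close>]) (auto simp: linear_pencil_def)
  have "norm (sym_eval J c T) = (1 / real K ^ CARD('n)) * norm (\<Sum>\<zeta>\<in>torus K. rotated_Gamma_eval J c T \<zeta>)"
    by (simp add: sym_eval_eq_torus_average[OF J T deg])
  also have "\<dots> \<le> (1 / real K ^ CARD('n)) * (\<Sum>\<zeta>\<in>torus K. norm (rotated_Gamma_eval J c T \<zeta>))"
    by (intro mult_left_mono norm_sum) auto
  also have "\<dots> \<le> (1 / real K ^ CARD('n)) * (\<Sum>\<zeta>::'n \<Rightarrow> complex\<in>torus K. sup_norm_polydisc (Gamma_poly c))"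
    by (intro mult_left_mono sum_mono term_bound) auto
  also have "\<dots> = sup_norm_polydisc (Gamma_poly c)"
    using \<open>K > 0\<close> by (simp add: card_torus)
  finally show ?thesis .
qed

end
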